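(* For integers $n\ge 2$ let $F_{2,n}(q)=(q-1)^{n-1}+(q-2)^n\in\mathbb{Z}[q]$. Then for every integer $k\ge 1$, the polynomial $F_{2,2}(q)$ divides $F_{2,6k+2}(q)$.
   Context: $F_{2,n}(q)$ is the factor satisfying $P_{K_{2,n}}(q)=q(q-1)F_{2,n}(q)$, where $P_{K_{2,n}}$ is the chromatic polynomial of the complete bipartite graph $K_{2,n}$. *)

theory Defs
  imports "HOL-Computational_Algebra.Polynomial"
begin

definition F2 :: "nat \<Rightarrow> int poly" where
  "F2 n = [:-1, 1:] ^ (n - 1) + [:-2, 1:] ^ n"

end

theory Submission
  imports Defs
begin

text \<open>
  Put \<open>b = q - 2\<close>, so that \<open>q - 1 = b + 1\<close> and \<open>F2 2 = b\<^sup>2 + b + 1\<close>.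
  Modulo \<open>b\<^sup>2 + b + 1\<close> both \<open>b\<close> and \<open>b + 1\<close> are sixth roots of unity, since
  \<open>b\<^sup>2 + b + 1\<close> divides \<open>b\<^sup>3 - 1\<close> and \<open>(b + 1)\<^sup>3 + 1 = (b + 2) (b\<^sup>2 + b + 1)\<close>.
  Hence \<open>F2 (6k + 2) = (b + 1)\<^bsup>6k+1\<^esup> + b\<^bsup>6k+2\<^esup>\<close> is congruent to
  \<open>(b + 1) + b\<^sup>2 = F2 2\<close>.
\<close>

lemma diff_dvd_power_diff:
  fixes x y :: "'a :: comm_ring_1"
  shows "x - y dvd x ^ n - y ^ n"
  using power_diff_sumr2 by (rule dvdI)

lemma dvd_power_diff_one_mult:
  fixes m x :: "'a :: comm_ring_1"
  assumes "m dvd x ^ d - 1"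
  shows "m dvd x ^ (d * k) - 1"
  using dvd_trans[OF assms diff_dvd_power_diff[of "x ^ d" 1 k]]
  by (simp add: power_mult)

lemma cyclotomic3_dvd_power_six_diff_one:
  fixes b :: "'a :: comm_ring_1"
  shows "b\<^sup>2 + b + 1 dvd b ^ 6 - 1"
proof -
  have "b ^ 6 - 1 = (b\<^sup>2 + b + 1) * ((b - 1) * (b ^ 3 + 1))"
    by (simp add: algebra_simps eval_nat_numeral)
  then show ?thesis by (rule dvdI)
qed

lemma cyclotomic3_dvd_succ_power_six_diff_one:
  fixes b :: "'a :: comm_ring_1"
  shows "b\<^sup>2 + b + 1 dvd (b + 1) ^ 6 - 1"
proof -
  have "(b + 1) ^ 6 - 1 = (b\<^sup>2 + b + 1) * ((b + 2) * ((b + 1) ^ 3 - 1))"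
    by (simp add: algebra_simps eval_nat_numeral)
  then show ?thesis by (rule dvdI)
qed

lemma cyclotomic3_dvd_power_sum:
  fixes b :: "'a :: comm_ring_1"
  shows "b\<^sup>2 + b + 1 dvd (b + 1) ^ (6 * k + 1) + b ^ (6 * k + 2)"
proof -
  let ?m = "b\<^sup>2 + b + 1"
  have a: "?m dvd (b + 1) ^ (6 * k) - 1"
    by (rule dvd_power_diff_one_mult) (rule cyclotomic3_dvd_succ_power_six_diff_one)
  have b: "?m dvd b ^ (6 * k) - 1"
    by (rule dvd_power_diff_one_mult) (rule cyclotomic3_dvd_power_six_diff_one)
  have "(b + 1) ^ (6 * k + 1) + b ^ (6 * k + 2)
      = (b + 1) * ((b + 1) ^ (6 * k) - 1) + b\<^sup>2 * (b ^ (6 * k) - 1) + ?m"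
    by (simp add: algebra_simps power_add power2_eq_square)
  also have "?m dvd \<dots>"
    using a b by (metis dvd_add dvd_mult dvd_refl)
  finally show ?thesis .
qed

theorem proposition4:
  fixes k :: nat
  assumes "k \<ge> 1"
  shows "F2 2 dvd F2 (6 * k + 2)"
proof -
  define b :: "int poly" where "b = [:-2, 1:]"
  have F2_b: "F2 n = (b + 1) ^ (n - 1) + b ^ n" for n
    by (simp add: F2_def b_def one_pCons)
  have "F2 2 = b\<^sup>2 + b + 1" and "F2 (6 * k + 2) = (b + 1) ^ (6 * k + 1) + b ^ (6 * k + 2)"
    by (simp_all add: F2_b)
  then show ?thesis
    using cyclotomic3_dvd_power_sum by metis
qed

end
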